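(* Let $\omega\in(0,1)$ and let $\alpha=(\alpha_m)$, $\beta=(\beta_m)$ be non-negative non-increasing null sequences with $\alpha_1,\beta_1\le1$. Then there is $C>0$ with $\alpha_m\le C\beta_m$ for all $m$ if and only if there exists a positive integer $r$ such that $\widetilde K^{(\omega)}_n(\alpha)\le\widetilde K^{(\omega)}_{n+r}(\beta)$ for every $n\in\mathbb N\cup\{0\}$.
   Context: For a non-negative non-increasing null sequence $\gamma$ and $n\ge0$: $K^{(\omega)}_n(\gamma)=|\{m:\omega^{n+1}<\gamma_m\le\omega^n\}|$ and $\widetilde K^{(\omega)}_n(\gamma)=\sum_{i=0}^nK^{(\omega)}_i(\gamma)$. *)

theory Defs
  imports "HOL-Analysis.Analysis"
begin

text \<open>Sequences are indexed from 1: gamma m for m \<ge> 1; the value at 0 is ignored.\<close>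

definition nnni_null :: "(nat \<Rightarrow> real) \<Rightarrow> bool" where
  "nnni_null g \<longleftrightarrow> (\<forall>m\<ge>1. 0 \<le> g m) \<and> (\<forall>m\<ge>1. g (Suc m) \<le> g m) \<and> (g \<longlonglongrightarrow> 0)"

definition K_om :: "real \<Rightarrow> nat \<Rightarrow> (nat \<Rightarrow> real) \<Rightarrow> nat" where
  "K_om \<omega> n g = card {m. m \<ge> 1 \<and> \<omega> ^ (n+1) < g m \<and> g m \<le> \<omega> ^ n}"

definition Kt_om :: "real \<Rightarrow> nat \<Rightarrow> (nat \<Rightarrow> real) \<Rightarrow> nat" where
  "Kt_om \<omega> n g = (\<Sum>i=0..n. K_om \<omega> i g)"

end

theory Submission
  imports Defs
begin

text \<open>Because \<open>\<gamma> 1 \<le> 1\<close>, \<open>Kt_om \<omega> n \<gamma>\<close> counts the indices \<open>m\<close> with \<open>\<gamma> m > \<omega>^(n+1)\<close>, and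
  since \<open>\<gamma>\<close> is non-increasing these are exactly \<open>1, \<dots>, Kt_om \<omega> n \<gamma>\<close>; so
  \<open>m \<le> Kt_om \<omega> n \<gamma>\<close> iff \<open>\<gamma> m > \<omega>^(n+1)\<close>. A bound \<open>\<alpha> \<le> C \<beta>\<close> therefore shifts every threshold
  by a fixed power \<open>\<omega>^r < 1/C\<close>. Conversely a shift by \<open>r\<close> gives \<open>\<alpha> \<le> \<beta> / \<omega>^(r+1)\<close>, the
  extra factor \<open>\<omega>\<close> coming from placing \<open>\<alpha> m\<close> in a band \<open>(\<omega>^(n+1), \<omega>^n]\<close>.\<close>

definition count_above :: "(nat \<Rightarrow> real) \<Rightarrow> real \<Rightarrow> nat" where
  "count_above g t = card {m. 1 \<le> m \<and> t < g m}"

lemma nnni_null_antimono: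
  assumes "nnni_null g" "1 \<le> k" "k \<le> m"
  shows "g m \<le> g k"
  using assms(3)
proof (induction m rule: dec_induct)
  case (step m)
  have "g (Suc m) \<le> g m" using assms(1,2) step(1) by (simp add: nnni_null_def)
  then show ?case using step(3) by linarith
qed simp

lemma nnni_null_finite_above:
  assumes "nnni_null g" "0 < t"
  shows "finite {m. 1 \<le> m \<and> t < g m}"
proof -
  have "g \<longlonglongrightarrow> 0" using assms(1) by (simp add: nnni_null_def)
  then have "eventually (\<lambda>m. g m < t) sequentially"
    using assms(2) by (rule order_tendstoD(2))
  then obtain N where N: "\<forall>m\<ge>N. g m < t"
    by (auto simp: eventually_sequentially)
  have "{m. 1 \<le> m \<and> t < g m} \<subseteq> {..<N}"
  proof
    fix m assume "m \<in> {m. 1 \<le> m \<and> t < g m}"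
    then show "m \<in> {..<N}"
      using N by (metis lessThan_iff linorder_not_less mem_Collect_eq order_less_asym)
  qed
  then show ?thesis by (rule finite_subset) simp
qed

lemma Kt_om_eq_count_above:
  assumes "nnni_null g" "g 1 \<le> 1" "0 < \<omega>" "\<omega> < 1"
  shows "Kt_om \<omega> n g = count_above g (\<omega> ^ (n + 1))"
proof (induction n)
  case 0
  have "g m \<le> 1" if "1 \<le> m" for m
    using nnni_null_antimono[OF assms(1) _ that] assms(2) by simp
  then have "{m. 1 \<le> m \<and> \<omega> < g m \<and> g m \<le> 1} = {m. 1 \<le> m \<and> \<omega> < g m}"
    by auto
  then show ?case by (simp add: Kt_om_def K_om_def count_above_def)
next
  case (Suc n)
  let ?A = "{m. 1 \<le> m \<and> \<omega> ^ (n + 1) < g m}"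
  let ?B = "{m. 1 \<le> m \<and> \<omega> ^ (Suc n + 1) < g m \<and> g m \<le> \<omega> ^ Suc n}"
  have "\<omega> ^ (Suc n + 1) \<le> \<omega> ^ (n + 1)"
    using assms(3,4) by (simp add: power_decreasing)
  then have split: "{m. 1 \<le> m \<and> \<omega> ^ (Suc n + 1) < g m} = ?A \<union> ?B"
    by auto
  have "finite (?A \<union> ?B)"
    unfolding split[symmetric] using nnni_null_finite_above[OF assms(1)] assms(3) by simp
  then have card_split: "card (?A \<union> ?B) = card ?A + card ?B"
    by (intro card_Un_disjoint) auto
  have "Kt_om \<omega> (Suc n) g = card ?A + card ?B"
    using Suc by (simp add: Kt_om_def K_om_def count_above_def)
  also have "\<dots> = count_above g (\<omega> ^ (Suc n + 1))"
    by (simp only: count_above_def split card_split)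
  finally show ?case .
qed

lemma le_count_above_iff:
  assumes "nnni_null g" "0 < t" "1 \<le> m"
  shows "m \<le> count_above g t \<longleftrightarrow> t < g m"
proof
  assume "t < g m"
  have "{1..m} \<subseteq> {m. 1 \<le> m \<and> t < g m}"
  proof
    fix k assume "k \<in> {1..m}"
    then show "k \<in> {m. 1 \<le> m \<and> t < g m}"
      using nnni_null_antimono[OF assms(1), of k m] \<open>t < g m\<close> by simp
  qed
  then have "card {1..m} \<le> count_above g t"
    unfolding count_above_def by (rule card_mono[OF nnni_null_finite_above[OF assms(1,2)]])
  then show "m \<le> count_above g t" by simp
next
  assume le: "m \<le> count_above g t"
  show "t < g m"
  proof (rule ccontr)
    assume "\<not> t < g m"
    have "{m. 1 \<le> m \<and> t < g m} \<subseteq> {1..<m}"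
    proof
      fix k assume k: "k \<in> {m. 1 \<le> m \<and> t < g m}"
      have "k < m"
      proof (rule ccontr)
        assume "\<not> k < m"
        then have "g k \<le> g m" using nnni_null_antimono[OF assms(1) assms(3)] by simp
        then show False using k \<open>\<not> t < g m\<close> by simp
      qed
      then show "k \<in> {1..<m}" using k by simp
    qed
    from card_mono[OF _ this] have "count_above g t \<le> m - 1"
      by (simp add: count_above_def)
    then show False using assms(3) le by linarith
  qed
qed

lemma count_above_mono:
  assumes "nnni_null h" "0 < u"
    and "\<And>m. 1 \<le> m \<Longrightarrow> t < g m \<Longrightarrow> u < h m"
  shows "count_above g t \<le> count_above h u"
  unfolding count_above_def
  by (rule card_mono[OF nnni_null_finite_above[OF assms(1,2)]]) (use assms(3) in auto)

lemma exists_power_band: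
  fixes \<omega> a :: real
  assumes "0 < \<omega>" "\<omega> < 1" "0 < a" "a \<le> 1"
  obtains n where "\<omega> ^ (n + 1) < a" "a \<le> \<omega> ^ n"
proof -
  obtain k where "\<omega> ^ k < a"
    using real_arch_pow_inv[OF assms(3,2)] by blast
  moreover have "\<omega> ^ (k + 1) \<le> \<omega> ^ k"
    using assms(1,2) by (intro power_decreasing) auto
  ultimately have reached: "\<exists>k. \<omega> ^ (k + 1) < a" by (metis le_less_trans)
  define n where "n = (LEAST k. \<omega> ^ (k + 1) < a)"
  have "\<omega> ^ (n + 1) < a"
    unfolding n_def using reached by (rule LeastI_ex)
  moreover have "a \<le> \<omega> ^ n"
  proof (cases n)
    case (Suc k)
    then have "\<not> \<omega> ^ (k + 1) < a"
      using not_less_Least[of k "\<lambda>k. \<omega> ^ (k + 1) < a"] n_def by simp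
    then show ?thesis using Suc by simp
  qed (simp add: assms(4))
  ultimately show thesis by (rule that)
qed

lemma Kt_om_shift_if_dominated:
  assumes "0 < \<omega>" "\<omega> < 1" "nnni_null \<alpha>" "nnni_null \<beta>" "\<alpha> 1 \<le> 1" "\<beta> 1 \<le> 1"
    and "0 < C" "\<forall>m\<ge>1. \<alpha> m \<le> C * \<beta> m"
  obtains r :: nat where "r > 0" "\<forall>n. Kt_om \<omega> n \<alpha> \<le> Kt_om \<omega> (n + r) \<beta>"
proof -
  obtain r where "\<omega> ^ r < 1 / C"
    using real_arch_pow_inv[of "1 / C" \<omega>] assms(2,7) by auto
  moreover have "\<omega> ^ Suc r \<le> \<omega> ^ r"
    using assms(1,2) by (intro power_decreasing) auto
  ultimately have "\<omega> ^ Suc r < 1 / C" by linarith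
  then have shrink: "\<omega> ^ Suc r * C < 1" using assms(7) by (simp add: field_simps)
  have "Kt_om \<omega> n \<alpha> \<le> Kt_om \<omega> (n + Suc r) \<beta>" for n
  proof -
    have "\<omega> ^ (n + Suc r + 1) < \<beta> m" if "1 \<le> m" "\<omega> ^ (n + 1) < \<alpha> m" for m
    proof -
      have "C * \<omega> ^ (n + Suc r + 1) = \<omega> ^ (n + 1) * (\<omega> ^ Suc r * C)"
        by (simp add: power_add algebra_simps)
      also have "\<dots> < \<omega> ^ (n + 1)"
        using mult_strict_left_mono[OF shrink] assms(1) by simp
      also have "\<dots> < C * \<beta> m" using that assms(8) by force
      finally show ?thesis using assms(7) by simp
    qed
    then show ?thesis
      using count_above_mono[OF assms(4)] assms(1)
      by (simp add: Kt_om_eq_count_above[OF assms(3,5,1,2)] Kt_om_eq_count_above[OF assms(4,6,1,2)])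
  qed
  then show thesis by (intro that[of "Suc r"]) auto
qed

lemma dominated_if_Kt_om_shift:
  assumes "0 < \<omega>" "\<omega> < 1" "nnni_null \<alpha>" "nnni_null \<beta>" "\<alpha> 1 \<le> 1" "\<beta> 1 \<le> 1"
    and shift: "\<forall>n. Kt_om \<omega> n \<alpha> \<le> Kt_om \<omega> (n + r) \<beta>"
    and "1 \<le> m"
  shows "\<alpha> m \<le> \<beta> m / \<omega> ^ (r + 1)"
proof (cases "0 < \<alpha> m")
  case False
  then show ?thesis
    using assms(1,4,8) by (simp add: nnni_null_def order.trans[OF _ divide_nonneg_pos])
next
  case True
  have "\<alpha> m \<le> 1" using nnni_null_antimono[OF assms(3) _ assms(8)] assms(5) by simp
  then obtain n where band: "\<omega> ^ (n + 1) < \<alpha> m" "\<alpha> m \<le> \<omega> ^ n"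
    using exists_power_band[OF assms(1,2) True] by blast
  have "m \<le> Kt_om \<omega> n \<alpha>"
    using band(1) le_count_above_iff[OF assms(3) _ assms(8)] assms(1)
    by (simp add: Kt_om_eq_count_above[OF assms(3,5,1,2)])
  also have "\<dots> \<le> Kt_om \<omega> (n + r) \<beta>" using shift by blast
  finally have "\<omega> ^ (n + r + 1) < \<beta> m"
    using le_count_above_iff[OF assms(4) _ assms(8)] assms(1)
    by (simp add: Kt_om_eq_count_above[OF assms(4,6,1,2)])
  moreover have "\<alpha> m * \<omega> ^ (r + 1) \<le> \<omega> ^ (n + r + 1)"
    using mult_right_mono[OF band(2), of "\<omega> ^ (r + 1)"] assms(1) by (simp add: power_add)
  ultimately have "\<alpha> m * \<omega> ^ (r + 1) \<le> \<beta> m" by linarith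
  then show ?thesis using assms(1) by (simp add: pos_le_divide_eq)
qed

theorem lemma2p6:
  fixes \<omega> :: real and \<alpha> \<beta> :: "nat \<Rightarrow> real"
  assumes "0 < \<omega>" "\<omega> < 1"
    and "nnni_null \<alpha>" "nnni_null \<beta>"
    and "\<alpha> 1 \<le> 1" "\<beta> 1 \<le> 1"
  shows "(\<exists>C>0. \<forall>m\<ge>1. \<alpha> m \<le> C * \<beta> m) \<longleftrightarrow>
         (\<exists>r::nat. r > 0 \<and> (\<forall>n. Kt_om \<omega> n \<alpha> \<le> Kt_om \<omega> (n + r) \<beta>))"
proof
  assume "\<exists>C>0. \<forall>m\<ge>1. \<alpha> m \<le> C * \<beta> m"
  then obtain C where "0 < C" "\<forall>m\<ge>1. \<alpha> m \<le> C * \<beta> m" by blast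
  then obtain r :: nat where "r > 0" "\<forall>n. Kt_om \<omega> n \<alpha> \<le> Kt_om \<omega> (n + r) \<beta>"
    by (rule Kt_om_shift_if_dominated[OF assms])
  then show "\<exists>r::nat. r > 0 \<and> (\<forall>n. Kt_om \<omega> n \<alpha> \<le> Kt_om \<omega> (n + r) \<beta>)"
    by blast
next
  assume "\<exists>r::nat. r > 0 \<and> (\<forall>n. Kt_om \<omega> n \<alpha> \<le> Kt_om \<omega> (n + r) \<beta>)"
  then obtain r where "\<forall>n. Kt_om \<omega> n \<alpha> \<le> Kt_om \<omega> (n + r) \<beta>" by blast
  then have "\<forall>m\<ge>1. \<alpha> m \<le> (1 / \<omega> ^ (r + 1)) * \<beta> m"
    using dominated_if_Kt_om_shift[OF assms] by simp
  then show "\<exists>C>0. \<forall>m\<ge>1. \<alpha> m \<le> C * \<beta> m"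
    using assms(1) by (intro exI[of _ "1 / \<omega> ^ (r + 1)"]) simp
qed

end
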